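(* Let $\mathcal{H}$ be a complex separable Hilbert space, $A\in\mathcal{B}(\mathcal{H})$ and $\mathcal{G}\subset\mathcal{H}$ countable such that $\{e^{tA}g\}_{g\in\mathcal{G},\,t\in[0,\infty)}$ is a semi-continuous frame for $\mathcal{H}$. If $\{e^{tA}\}_{t\ge0}$ is exponentially stable, then there exists $0<L<\infty$ such that $\{e^{tA}g\}_{g\in\mathcal{G},\,t\in[0,L]}$ is a semi-continuous frame for $\mathcal{H}$.
   Context: For $A\in\mathcal{B}(\mathcal{H})$, $e^{tA}:=\sum_{n\ge0}\frac{t^n}{n!}A^n$. The semigroup $\{e^{tA}\}_{t\ge0}$ is exponentially stable if there are constants $M\ge1$ and $\omega<0$ with $\|e^{tA}\|\le Me^{\omega t}$ for all $t\ge0$. For a countable $\mathcal{G}\subset\mathcal{H}$ and an interval $\mathcal{T}\subset[0,\infty)$, $\{e^{tA}g\}_{g\in\mathcal{G},t\in\mathcal{T}}$ is a semi-continuous frame for $\mathcal{H}$ if there are constants $c,C>0$ such that $c\|f\|^2\le\sum_{g\in\mathcal{G}}\int_{\mathcal{T}}|\langle f,e^{tA}g\rangle|^2\,dt\le C\|f\|^2$ for all $f\in\mathcal{H}$. *)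

theory Defs
  imports "HOL-Analysis.Analysis"
begin

text \<open>HOL-Analysis only provides real inner product spaces, so we introduce complex
  vector spaces, complex inner product spaces and complex Hilbert spaces as type classes.\<close>

class complex_vector = real_vector +
  fixes cscale :: "complex \<Rightarrow> 'a \<Rightarrow> 'a"
  assumes cscale_add_right: "cscale a (x + y) = cscale a x + cscale a y"
    and cscale_add_left: "cscale (a + b) x = cscale a x + cscale b x"
    and cscale_cscale: "cscale a (cscale b x) = cscale (a * b) x"
    and cscale_one: "cscale 1 x = x"
    and scaleR_cscale: "r *\<^sub>R x = cscale (complex_of_real r) x"

class complex_inner = complex_vector + real_normed_vector +
  fixes cinner :: "'a \<Rightarrow> 'a \<Rightarrow> complex"
  assumes cinner_add_left: "cinner (x + y) z = cinner x z + cinner y z"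
    and cinner_cscale_left: "cinner (cscale a x) y = a * cinner x y"
    and cinner_commute: "cinner y x = cnj (cinner x y)"
    and cinner_ge_zero: "0 \<le> Re (cinner x x)"
    and cinner_eq_zero_iff: "cinner x x = 0 \<longleftrightarrow> x = 0"
    and norm_eq_sqrt_cinner: "norm x = sqrt (Re (cinner x x))"

class complex_hilbert = complex_inner + complete_space

definition separable_space :: "'a::topological_space set \<Rightarrow> bool" where
  "separable_space S \<longleftrightarrow> (\<exists>D. countable D \<and> D \<subseteq> S \<and> S \<subseteq> closure D)"

text \<open>Elements of \<open>B(H)\<close>: bounded (real-)linear operators that are in addition complex linear.\<close>

definition complex_linear_op :: "('a::complex_inner \<Rightarrow>\<^sub>L 'a) \<Rightarrow> bool" where
  "complex_linear_op A \<longleftrightarrow> (\<forall>c x. blinfun_apply A (cscale c x) = cscale c (blinfun_apply A x))"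

fun blpow :: "('a::real_normed_vector \<Rightarrow>\<^sub>L 'a) \<Rightarrow> nat \<Rightarrow> ('a \<Rightarrow>\<^sub>L 'a)" where
  "blpow A 0 = id_blinfun"
| "blpow A (Suc n) = A o\<^sub>L blpow A n"

definition op_exp :: "real \<Rightarrow> ('a::real_normed_vector \<Rightarrow>\<^sub>L 'a) \<Rightarrow> ('a \<Rightarrow>\<^sub>L 'a)" where
  "op_exp t A = (\<Sum>n. (t ^ n / fact n) *\<^sub>R blpow A n)"

definition exp_stable :: "('a::real_normed_vector \<Rightarrow>\<^sub>L 'a) \<Rightarrow> bool" where
  "exp_stable A \<longleftrightarrow> (\<exists>M \<omega>::real. M \<ge> 1 \<and> \<omega> < 0 \<and>
      (\<forall>t\<ge>0. norm (op_exp t A) \<le> M * exp (\<omega> * t)))"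

definition frame_sum :: "('a::complex_inner \<Rightarrow>\<^sub>L 'a) \<Rightarrow> 'a set \<Rightarrow> real set \<Rightarrow> 'a \<Rightarrow> ennreal" where
  "frame_sum A G T f =
     (\<integral>\<^sup>+ g. (\<integral>\<^sup>+ t. indicator T t * ennreal ((cmod (cinner f (blinfun_apply (op_exp t A) g)))\<^sup>2) \<partial>lborel)
        \<partial>count_space G)"

definition semi_continuous_frame :: "('a::complex_inner \<Rightarrow>\<^sub>L 'a) \<Rightarrow> 'a set \<Rightarrow> real set \<Rightarrow> bool" where
  "semi_continuous_frame A G T \<longleftrightarrow> (\<exists>c C::real. c > 0 \<and> C > 0 \<and>
     (\<forall>f. ennreal (c * (norm f)\<^sup>2) \<le> frame_sum A G T f \<and> frame_sum A G T f \<le> ennreal (C * (norm f)\<^sup>2)))"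

end

theory Submission
  imports Defs
begin

text \<open>Exponential stability makes \<open>\<parallel>e^{LA}\<parallel>\<close> small for large \<open>L\<close>. By the semigroup law
  \<open>e^{(L+s)A} = e^{LA} e^{sA}\<close>, the part over \<open>[L,\<infinity>)\<close> of the frame sum of \<open>f\<close> is the frame sum
  over \<open>[0,\<infinity>)\<close> of the vector \<open>u\<close> with \<open>\<langle>f, e^{LA} x\<rangle> = \<langle>u, x\<rangle>\<close> (the adjoint of \<open>e^{LA}\<close> applied
  to \<open>f\<close>, supplied by the Riesz representation theorem). The upper frame bound therefore bounds this
  tail by \<open>C \<parallel>e^{LA}\<parallel>\<^sup>2 \<parallel>f\<parallel>\<^sup>2 \<le> c/2 \<parallel>f\<parallel>\<^sup>2\<close> for large \<open>L\<close>, and subtracting it from the lower frame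
  bound \<open>c \<parallel>f\<parallel>\<^sup>2\<close> leaves \<open>c/2 \<parallel>f\<parallel>\<^sup>2\<close> on \<open>[0,L]\<close>.\<close>

section \<open>Complex inner product spaces\<close>

context complex_inner begin

lemma cinner_zero_left [simp]: "cinner 0 y = 0"
  using cinner_add_left[of 0 0 y] by simp

lemma cinner_zero_right [simp]: "cinner x 0 = 0"
  by (metis cinner_commute cinner_zero_left complex_cnj_zero)

lemma cinner_minus_left: "cinner (- x) y = - cinner x y"
proof -
  have "cinner x y + cinner (- x) y = 0"
    using cinner_add_left[of x "- x" y] by simp
  moreover have "cinner (- x) y = - cinner x y + (cinner x y + cinner (- x) y)"
    by simp
  ultimately show ?thesis by simp
qed

lemma cinner_add_right: "cinner x (y + z) = cinner x y + cinner x z"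
  by (metis cinner_add_left cinner_commute complex_cnj_add)

lemma cinner_minus_right: "cinner x (- y) = - cinner x y"
  by (metis cinner_commute cinner_minus_left complex_cnj_minus)

lemma cinner_cscale_right: "cinner x (cscale a y) = cnj a * cinner x y"
  by (metis cinner_commute cinner_cscale_left complex_cnj_mult)

lemma cinner_scaleR_right: "cinner x (r *\<^sub>R y) = complex_of_real r * cinner x y"
  by (simp add: scaleR_cscale cinner_cscale_right)

lemma cinner_self: "cinner x x = complex_of_real ((norm x)\<^sup>2)"
proof -
  have "Im (cinner x x) = 0"
    using arg_cong[OF cinner_commute[of x x], of Im] by simp
  moreover have "Re (cinner x x) = (norm x)\<^sup>2"
    using norm_eq_sqrt_cinner[of x] cinner_ge_zero[of x] by simp
  ultimately show ?thesis by (simp add: complex_eq_iff)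
qed

lemma power2_norm_eq_cinner: "(norm x)\<^sup>2 = Re (cinner x x)"
  by (simp add: cinner_self)

lemma norm_add_sq: "(norm (x + y))\<^sup>2 = (norm x)\<^sup>2 + (norm y)\<^sup>2 + 2 * Re (cinner x y)"
proof -
  have "cinner (x + y) (x + y) = cinner x x + cinner y y + (cinner x y + cnj (cinner x y))"
    by (simp add: cinner_add_left cinner_add_right cinner_commute[of y x])
  then show ?thesis by (simp add: power2_norm_eq_cinner)
qed

lemma norm_cscale: "norm (cscale a x) = cmod a * norm x"
proof (rule power2_eq_imp_eq)
  have "cinner (cscale a x) (cscale a x) = (a * cnj a) * cinner x x"
    by (simp add: cinner_cscale_left cinner_cscale_right mult.left_commute)
  also have "\<dots> = complex_of_real ((cmod a * norm x)\<^sup>2)"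
    by (simp only: complex_norm_square[symmetric] cinner_self) (simp add: power_mult_distrib)
  finally show "(norm (cscale a x))\<^sup>2 = (cmod a * norm x)\<^sup>2"
    by (simp add: power2_norm_eq_cinner)
qed simp_all

lemma Re_cinner_le: "Re (cinner x y) \<le> norm x * norm y"
proof -
  have "2 * Re (cinner x y) = (norm (x + y))\<^sup>2 - (norm x)\<^sup>2 - (norm y)\<^sup>2"
    using norm_add_sq[of x y] by simp
  also have "\<dots> \<le> (norm x + norm y)\<^sup>2 - (norm x)\<^sup>2 - (norm y)\<^sup>2"
    using norm_triangle_ineq[of x y] by (simp add: power_mono)
  finally show ?thesis by (simp add: power2_eq_square algebra_simps)
qed

end

lemma unimodular_mult_eq_cmod: "\<exists>c. cmod c = 1 \<and> c * z = complex_of_real (cmod z)"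
proof (cases "z = 0")
  case False
  have "cnj z / cmod z * z = complex_of_real ((cmod z)\<^sup>2) / cmod z"
    by (simp only: complex_norm_square) (simp add: divide_inverse ac_simps)
  with False show ?thesis
    by (intro exI[of _ "cnj z / cmod z"]) (simp add: norm_divide power2_eq_square)
qed (auto intro: exI[of _ 1])

lemma cmod_cinner_le: "cmod (cinner x y) \<le> norm x * norm (y :: 'a::complex_inner)"
proof -
  obtain c where "cmod c = 1" and c: "c * cinner x y = complex_of_real (cmod (cinner x y))"
    using unimodular_mult_eq_cmod by blast
  have "cmod (cinner x y) = Re (cinner (cscale c x) y)"
    by (simp add: cinner_cscale_left c)
  also have "\<dots> \<le> norm x * norm y"
    using Re_cinner_le[of "cscale c x" y] by (simp add: norm_cscale \<open>cmod c = 1\<close>)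
  finally show ?thesis .
qed

lemma bounded_linear_cscale: "bounded_linear (cscale c :: 'a::complex_inner \<Rightarrow> 'a)"
proof (rule bounded_linear_intro[where K = "cmod c"])
  show "cscale c (x + y) = cscale c x + cscale c y" for x y :: 'a
    by (rule cscale_add_right)
  show "cscale c (r *\<^sub>R x) = r *\<^sub>R cscale c x" for r and x :: 'a
    by (simp add: scaleR_cscale cscale_cscale mult.commute)
  show "norm (cscale c x) \<le> norm x * cmod c" for x :: 'a
    by (simp add: norm_cscale mult.commute)
qed

lemma bounded_linear_cinner_right: "bounded_linear (cinner (f :: 'a::complex_inner))"
proof (rule bounded_linear_intro[where K = "norm f"])
  show "cinner f (x + y) = cinner f x + cinner f y" for x y
    by (rule cinner_add_right)
  show "cinner f (r *\<^sub>R x) = r *\<^sub>R cinner f x" for r x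
    by (simp add: cinner_scaleR_right scaleR_conv_of_real)
  show "norm (cinner f x) \<le> norm x * norm f" for x
    using cmod_cinner_le[of f x] by (simp add: mult.commute)
qed

lemma bounded_linear_cinner_left: "bounded_linear (\<lambda>x. cinner x (f :: 'a::complex_inner))"
  using bounded_linear_compose[OF bounded_linear_cnj bounded_linear_cinner_right[of f]]
  by (simp add: cinner_commute[of f])

instance complex_hilbert \<subseteq> banach ..

section \<open>The Riesz representation theorem\<close>

lemma norm_diff_sq_le_of_norm_add_ge:
  fixes x y :: "'a::complex_inner"
  assumes "norm x \<le> 1" "norm y \<le> 1" "2 - \<delta> \<le> norm (x + y)"
  shows "(norm (x - y))\<^sup>2 \<le> 4 * \<delta>"
proof -
  have "(norm (x - y))\<^sup>2 + (norm (x + y))\<^sup>2 = 2 * (norm x)\<^sup>2 + 2 * (norm y)\<^sup>2"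
    using norm_add_sq[of x y] norm_add_sq[of x "- y"] by (simp add: cinner_minus_right)
  moreover have "(norm x)\<^sup>2 \<le> 1" "(norm y)\<^sup>2 \<le> 1"
    using assms(1,2) by (auto simp: power_le_one_iff)
  moreover have "4 - 4 * \<delta> \<le> (norm (x + y))\<^sup>2"
  proof (cases "\<delta> \<le> 2")
    case True
    then have "(2 - \<delta>)\<^sup>2 \<le> (norm (x + y))\<^sup>2"
      using assms(3) by (intro power_mono) auto
    moreover have "(2 - \<delta>)\<^sup>2 = 4 - 4 * \<delta> + \<delta>\<^sup>2"
      by (simp add: power2_eq_square algebra_simps)
    ultimately show ?thesis
      using zero_le_power2[of \<delta>] by linarith
  qed (use zero_le_power2[of "norm (x + y)"] in linarith)
  ultimately show ?thesis by linarith
qed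

lemma Cauchy_of_norm_add_ge:
  fixes h :: "nat \<Rightarrow> 'a::complex_inner"
  assumes "\<And>n. norm (h n) \<le> 1" and "\<And>m n. 2 - (\<delta> m + \<delta> n) \<le> norm (h m + h n)"
    and "\<delta> \<longlonglongrightarrow> 0"
  shows "Cauchy h"
proof (rule CauchyI)
  fix e :: real
  assume "0 < e"
  then have "eventually (\<lambda>n. \<delta> n < e\<^sup>2 / 8) sequentially"
    using assms(3) by (intro order_tendstoD(2)) auto
  then obtain M where M: "\<And>n. n \<ge> M \<Longrightarrow> \<delta> n < e\<^sup>2 / 8"
    by (auto simp: eventually_sequentially)
  show "\<exists>M. \<forall>m\<ge>M. \<forall>n\<ge>M. norm (h m - h n) < e"
  proof (intro exI allI impI)
    fix m n
    assume "M \<le> m" "M \<le> n"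
    then have "\<delta> m < e\<^sup>2 / 8" "\<delta> n < e\<^sup>2 / 8"
      using M by blast+
    then have "(norm (h m - h n))\<^sup>2 < e\<^sup>2"
      using norm_diff_sq_le_of_norm_add_ge[OF assms(1,1,2), of m n] by (auto simp: field_simps)
    with \<open>0 < e\<close> show "norm (h m - h n) < e"
      by (simp add: power_less_imp_less_base)
  qed
qed

lemma onorm_approx_real_value:
  fixes \<phi> :: "'a::complex_inner \<Rightarrow> complex"
  assumes lin: "bounded_linear \<phi>" and hom: "\<And>c x. \<phi> (cscale c x) = c * \<phi> x" and "e > 0"
  shows "\<exists>h r. norm h \<le> 1 \<and> \<phi> h = complex_of_real r \<and> onorm \<phi> - e < r"
proof -
  have "bdd_above (range (\<lambda>x. norm (\<phi> x) / norm x))"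
    using le_onorm[OF lin] by (intro bdd_aboveI2) auto
  moreover have "onorm \<phi> - e < (SUP x. norm (\<phi> x) / norm x)"
    using \<open>e > 0\<close> by (simp add: onorm_def)
  ultimately obtain x where x: "onorm \<phi> - e < cmod (\<phi> x) / norm x"
    using less_cSUP_iff[OF UNIV_not_empty] by blast
  obtain c where "cmod c = 1" and c: "c * \<phi> x = complex_of_real (cmod (\<phi> x))"
    using unimodular_mult_eq_cmod by blast
  define h where "h = cscale (c / complex_of_real (norm x)) x"
  have "norm h \<le> 1"
    by (cases "x = 0") (simp_all add: h_def norm_cscale norm_divide \<open>cmod c = 1\<close>)
  moreover have "\<phi> h = complex_of_real (cmod (\<phi> x) / norm x)"
  proof -
    have "\<phi> h = c * \<phi> x / complex_of_real (norm x)"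
      by (simp add: h_def hom)
    then show ?thesis
      by (simp add: c)
  qed
  ultimately show ?thesis
    using x by blast
qed

lemma norming_vector_of_maximizing_sequence:
  fixes \<phi> :: "'a::complex_hilbert \<Rightarrow> complex"
  assumes lin: "bounded_linear \<phi>" and bound: "\<And>x. cmod (\<phi> x) \<le> N * norm x" and "N > 0"
    and h: "\<And>n. norm (h n) \<le> 1" and r: "\<And>n. \<phi> (h n) = complex_of_real (r n)" and "r \<longlonglongrightarrow> N"
  shows "\<exists>h0. norm h0 = 1 \<and> \<phi> h0 = complex_of_real N"
proof -
  interpret \<phi>: bounded_linear \<phi> by (rule lin)
  have "Cauchy h"
  proof (rule Cauchy_of_norm_add_ge[OF h])
    have "(\<lambda>n. N - r n) \<longlonglongrightarrow> 0"
      using tendsto_diff[OF tendsto_const[of N] \<open>r \<longlonglongrightarrow> N\<close>] by simp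
    then show "(\<lambda>n. (N - r n) / N) \<longlonglongrightarrow> 0"
      by (rule tendsto_divide_zero)
    fix m n
    have "r m + r n \<le> cmod (\<phi> (h m + h n))"
      using abs_ge_self[of "r m + r n"] by (simp add: \<phi>.add r flip: of_real_add)
    also have "\<dots> \<le> N * norm (h m + h n)"
      by (rule bound)
    finally have "r m + r n \<le> N * norm (h m + h n)" .
    moreover have "2 - ((N - r m) / N + (N - r n) / N) = (r m + r n) / N"
      using \<open>N > 0\<close> by (simp add: field_simps)
    ultimately show "2 - ((N - r m) / N + (N - r n) / N) \<le> norm (h m + h n)"
      using \<open>N > 0\<close> by (simp add: pos_divide_le_eq mult.commute)
  qed
  then obtain h0 where lim: "h \<longlonglongrightarrow> h0"
    using Cauchy_convergent convergent_def by blast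
  have "norm h0 \<le> 1"
    using LIMSEQ_le_const2[OF tendsto_norm[OF lim]] h by blast
  have "(\<lambda>n. \<phi> (h n)) \<longlonglongrightarrow> complex_of_real N"
    unfolding r by (rule tendsto_of_real[OF \<open>r \<longlonglongrightarrow> N\<close>])
  then have "\<phi> h0 = complex_of_real N"
    using LIMSEQ_unique[OF \<phi>.tendsto[OF lim]] by blast
  moreover have "norm h0 = 1"
    using bound[of h0] \<open>\<phi> h0 = complex_of_real N\<close> \<open>norm h0 \<le> 1\<close> \<open>N > 0\<close> by simp
  ultimately show ?thesis
    by blast
qed

lemma exists_norming_vector:
  fixes \<phi> :: "'a::complex_hilbert \<Rightarrow> complex"
  assumes lin: "bounded_linear \<phi>" and hom: "\<And>c x. \<phi> (cscale c x) = c * \<phi> x"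
    and "onorm \<phi> > 0"
  shows "\<exists>h. norm h = 1 \<and> \<phi> h = complex_of_real (onorm \<phi>)"
proof -
  have "\<forall>n. \<exists>h r. norm h \<le> 1 \<and> \<phi> h = complex_of_real r \<and> onorm \<phi> - 1 / Suc n < r"
    using onorm_approx_real_value[OF lin hom] by simp
  then obtain h r where h: "\<And>n. norm (h n) \<le> 1" and r: "\<And>n. \<phi> (h n) = complex_of_real (r n)"
    and r_gt: "\<And>n. onorm \<phi> - 1 / Suc n < r n"
    by metis
  have r_le: "r n \<le> onorm \<phi>" for n
  proof -
    have "r n \<le> cmod (\<phi> (h n))"
      by (simp add: r)
    also have "\<dots> \<le> onorm \<phi> * norm (h n)"
      by (rule onorm[OF lin])
    also have "\<dots> \<le> onorm \<phi>"
      using h[of n] \<open>onorm \<phi> > 0\<close> by (simp add: mult_left_le)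
    finally show ?thesis .
  qed
  have "r \<longlonglongrightarrow> onorm \<phi>"
  proof (rule tendsto_sandwich)
    show "eventually (\<lambda>n. onorm \<phi> - 1 / Suc n \<le> r n) sequentially"
      using r_gt by (intro always_eventually allI less_imp_le)
    show "(\<lambda>n. onorm \<phi> - 1 / Suc n) \<longlonglongrightarrow> onorm \<phi>"
      using tendsto_diff[OF tendsto_const LIMSEQ_inverse_real_of_nat] by (simp add: inverse_eq_divide)
  qed (use r_le in auto)
  then show ?thesis
    using norming_vector_of_maximizing_sequence[where h = h and r = r, OF lin onorm[OF lin] \<open>onorm \<phi> > 0\<close> h r]
    by blast
qed

lemma cmod_add_of_real_sq: "(cmod (z + complex_of_real r))\<^sup>2 = (cmod z)\<^sup>2 + r\<^sup>2 + 2 * r * Re z"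
  by (simp only: cmod_power2) (simp add: power2_eq_square algebra_simps)

text \<open>Comparing \<open>\<phi>\<close> with \<open>N \<parallel>\<cdot>\<parallel>\<close> at \<open>h + e x\<close> gives \<open>2 N Re (e w) \<le> O(|e|\<^sup>2)\<close> for the defect
  \<open>w = \<phi> x - N \<langle>x, h\<rangle>\<close>; taking \<open>e\<close> a small positive multiple of \<open>cnj w\<close> forces \<open>w = 0\<close>.\<close>

lemma functional_eq_cinner_norming_vector:
  fixes \<phi> :: "'a::complex_inner \<Rightarrow> complex"
  assumes lin: "bounded_linear \<phi>" and hom: "\<And>c x. \<phi> (cscale c x) = c * \<phi> x"
    and bound: "\<And>y. cmod (\<phi> y) \<le> N * norm y" and "N > 0"
    and h: "norm h = 1" "\<phi> h = complex_of_real N"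
  shows "\<phi> x = complex_of_real N * cinner x h"
proof (rule ccontr)
  interpret \<phi>: bounded_linear \<phi> by (rule lin)
  define w where "w = \<phi> x - complex_of_real N * cinner x h"
  assume "\<phi> x \<noteq> complex_of_real N * cinner x h"
  then have "(cmod w)\<^sup>2 > 0"
    by (simp add: w_def)
  have first_order: "2 * N * Re (e * w) \<le> N\<^sup>2 * (cmod e)\<^sup>2 * (norm x)\<^sup>2" for e
  proof -
    have "(cmod (\<phi> (cscale e x + h)))\<^sup>2 \<le> (N * norm (cscale e x + h))\<^sup>2"
      using bound by (intro power_mono) auto
    moreover have "(cmod (\<phi> (cscale e x + h)))\<^sup>2 = (cmod (e * \<phi> x))\<^sup>2 + N\<^sup>2 + 2 * N * Re (e * \<phi> x)"
      by (simp add: \<phi>.add hom h cmod_add_of_real_sq)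
    moreover have "(N * norm (cscale e x + h))\<^sup>2
        = N\<^sup>2 * ((cmod e)\<^sup>2 * (norm x)\<^sup>2 + 1 + 2 * Re (e * cinner x h))"
      by (simp add: power_mult_distrib norm_add_sq norm_cscale h cinner_cscale_left)
    moreover have "2 * N * Re (e * w) = 2 * N * Re (e * \<phi> x) - 2 * N\<^sup>2 * Re (e * cinner x h)"
      by (simp add: w_def algebra_simps power2_eq_square)
    moreover have "N\<^sup>2 * ((cmod e)\<^sup>2 * (norm x)\<^sup>2 + 1 + 2 * Re (e * cinner x h))
        = N\<^sup>2 * (cmod e)\<^sup>2 * (norm x)\<^sup>2 + N\<^sup>2 + 2 * N\<^sup>2 * Re (e * cinner x h)"
      by (simp add: algebra_simps)
    ultimately show ?thesis
      using zero_le_power2[of "cmod (e * \<phi> x)"] by linarith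
  qed
  define r where "r = 1 / (N * ((norm x)\<^sup>2 + 1))"
  have "r > 0"
    using \<open>N > 0\<close> by (simp add: r_def add_nonneg_pos)
  have "complex_of_real r * cnj w * w = complex_of_real (r * (cmod w)\<^sup>2)"
    by (simp only: mult.assoc complex_norm_square mult.commute[of "cnj w"] of_real_mult)
  moreover have "(cmod (complex_of_real r * cnj w))\<^sup>2 = r\<^sup>2 * (cmod w)\<^sup>2"
    using \<open>r > 0\<close> by (simp add: norm_mult power_mult_distrib)
  ultimately have "2 * N * (r * (cmod w)\<^sup>2) \<le> N\<^sup>2 * (r\<^sup>2 * (cmod w)\<^sup>2) * (norm x)\<^sup>2"
    using first_order[of "complex_of_real r * cnj w"] by (simp only: Re_complex_of_real)
  then have "(N * r * (cmod w)\<^sup>2) * 2 \<le> (N * r * (cmod w)\<^sup>2) * (N * r * (norm x)\<^sup>2)"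
    by (simp add: power2_eq_square algebra_simps)
  then have "2 \<le> N * r * (norm x)\<^sup>2"
    using \<open>N > 0\<close> \<open>r > 0\<close> \<open>(cmod w)\<^sup>2 > 0\<close> by (simp add: mult_le_cancel_left_pos)
  moreover have "N * r * (norm x)\<^sup>2 < 1"
  proof -
    have "0 < (norm x)\<^sup>2 + 1"
      by (simp add: add_nonneg_pos)
    moreover have "N * r * (norm x)\<^sup>2 = (norm x)\<^sup>2 / ((norm x)\<^sup>2 + 1)"
      using \<open>N > 0\<close> by (simp add: r_def)
    ultimately show ?thesis
      by (simp add: divide_less_eq)
  qed
  ultimately show False
    by linarith
qed

theorem riesz_representation:
  fixes \<phi> :: "'a::complex_hilbert \<Rightarrow> complex"
  assumes lin: "bounded_linear \<phi>" and hom: "\<And>c x. \<phi> (cscale c x) = c * \<phi> x"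
  shows "\<exists>u. norm u = onorm \<phi> \<and> (\<forall>x. \<phi> x = cinner x u)"
proof (cases "onorm \<phi> = 0")
  case True
  then show ?thesis
    using onorm_eq_0[OF lin] by (intro exI[of _ 0]) simp
next
  case False
  then have "onorm \<phi> > 0"
    using onorm_pos_le[OF lin] by linarith
  then obtain h where h: "norm h = 1" "\<phi> h = complex_of_real (onorm \<phi>)"
    using exists_norming_vector[OF lin hom] by blast
  have "\<phi> x = cinner x (cscale (complex_of_real (onorm \<phi>)) h)" for x
    using functional_eq_cinner_norming_vector[OF lin hom onorm[OF lin] \<open>onorm \<phi> > 0\<close> h]
    by (simp add: cinner_cscale_right)
  moreover have "norm (cscale (complex_of_real (onorm \<phi>)) h) = onorm \<phi>"
    using \<open>onorm \<phi> > 0\<close> by (simp add: norm_cscale h)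
  ultimately show ?thesis
    by blast
qed

lemma exists_adjoint_vector:
  fixes T :: "'a::complex_hilbert \<Rightarrow>\<^sub>L 'a"
  assumes hom: "\<And>c x. blinfun_apply T (cscale c x) = cscale c (blinfun_apply T x)"
  shows "\<exists>u. norm u \<le> norm T * norm f \<and> (\<forall>x. cinner f (blinfun_apply T x) = cinner u x)"
proof -
  let ?\<phi> = "\<lambda>x. cinner (blinfun_apply T x) f"
  have lin: "bounded_linear ?\<phi>"
    using bounded_linear_compose[OF bounded_linear_cinner_left blinfun.bounded_linear_right] .
  obtain u where u: "norm u = onorm ?\<phi>" "\<And>x. ?\<phi> x = cinner x u"
    using riesz_representation[OF lin] by (auto simp: hom cinner_cscale_left)
  have "onorm ?\<phi> \<le> norm T * norm f"
  proof (rule onorm_bound)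
    fix x
    have "cmod (?\<phi> x) \<le> norm (blinfun_apply T x) * norm f"
      by (rule cmod_cinner_le)
    also have "\<dots> \<le> norm T * norm x * norm f"
      by (intro mult_right_mono norm_blinfun) simp
    finally show "cmod (?\<phi> x) \<le> norm T * norm f * norm x"
      by (simp add: ac_simps)
  qed simp
  moreover have "cinner f (blinfun_apply T x) = cinner u x" for x
    by (metis cinner_commute u(2))
  ultimately show ?thesis
    using u(1) by (intro exI[of _ u]) simp
qed

section \<open>The operator exponential\<close>

lemma blinfun_compose_assoc: "(a o\<^sub>L b) o\<^sub>L c = a o\<^sub>L (b o\<^sub>L c)"
  by (rule blinfun_eqI) simp

lemma blpow_add: "blpow A i o\<^sub>L blpow A j = blpow A (i + j)"
  by (induction i) (simp_all add: blinfun_compose_assoc blinfun_eqI)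

lemma norm_blpow_le: "norm (blpow A n) \<le> norm A ^ n"
proof (induction n)
  case 0
  then show ?case
    using norm_blinfun_id_le by simp
next
  case (Suc n)
  have "norm (blpow A (Suc n)) \<le> norm A * norm (blpow A n)"
    by (simp add: norm_blinfun_compose)
  also have "\<dots> \<le> norm A * norm A ^ n"
    using Suc by (simp add: mult_left_mono)
  finally show ?case
    by simp
qed

lemma summable_norm_op_exp_series: "summable (\<lambda>n. norm ((t ^ n / fact n) *\<^sub>R blpow A n))"
proof (rule summable_comparison_test')
  show "summable (\<lambda>n. inverse (fact n) * (\<bar>t\<bar> * norm A) ^ n)"
    by (rule summable_exp)
  fix n
  have "norm ((t ^ n / fact n) *\<^sub>R blpow A n) = \<bar>t\<bar> ^ n / fact n * norm (blpow A n)"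
    by (simp add: power_abs)
  also have "\<dots> \<le> \<bar>t\<bar> ^ n / fact n * norm A ^ n"
    by (intro mult_left_mono norm_blpow_le) simp
  also have "\<dots> = inverse (fact n) * (\<bar>t\<bar> * norm A) ^ n"
    by (simp add: power_mult_distrib divide_inverse)
  finally show "norm (norm ((t ^ n / fact n) *\<^sub>R blpow A n)) \<le> inverse (fact n) * (\<bar>t\<bar> * norm A) ^ n"
    by simp
qed

lemma summable_op_exp_series:
  fixes A :: "'a::banach \<Rightarrow>\<^sub>L 'a"
  shows "summable (\<lambda>n. (t ^ n / fact n) *\<^sub>R blpow A n)"
  by (rule summable_norm_cancel[OF summable_norm_op_exp_series])

lemma op_exp_apply_sums:
  fixes A :: "'a::banach \<Rightarrow>\<^sub>L 'a"
  shows "(\<lambda>n. (t ^ n / fact n) *\<^sub>R blinfun_apply (blpow A n) x) sums blinfun_apply (op_exp t A) x"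
  using bounded_linear.sums[OF blinfun.bounded_linear_left summable_sums[OF summable_op_exp_series]]
  by (simp add: op_exp_def blinfun.scaleR_left)

lemma blpow_cscale:
  assumes "complex_linear_op A"
  shows "blinfun_apply (blpow A n) (cscale c x) = cscale c (blinfun_apply (blpow A n) x)"
  using assms by (induction n) (simp_all add: complex_linear_op_def)

lemma op_exp_cscale:
  fixes A :: "'a::complex_hilbert \<Rightarrow>\<^sub>L 'a"
  assumes "complex_linear_op A"
  shows "blinfun_apply (op_exp t A) (cscale c x) = cscale c (blinfun_apply (op_exp t A) x)"
proof -
  have "(\<lambda>n. cscale c ((t ^ n / fact n) *\<^sub>R blinfun_apply (blpow A n) x))
      sums cscale c (blinfun_apply (op_exp t A) x)"
    by (rule bounded_linear.sums[OF bounded_linear_cscale op_exp_apply_sums])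
  moreover have "cscale c ((t ^ n / fact n) *\<^sub>R blinfun_apply (blpow A n) x)
      = (t ^ n / fact n) *\<^sub>R blinfun_apply (blpow A n) (cscale c x)" for n
    by (simp add: blpow_cscale[OF assms] scaleR_cscale cscale_cscale mult.commute)
  ultimately show ?thesis
    using sums_unique2[OF op_exp_apply_sums] by simp
qed

lemma sum_square_minus_triangle_tendsto_0:
  fixes f :: "nat \<times> nat \<Rightarrow> real"
  assumes f_nonneg: "\<And>p. 0 \<le> f p" and "convergent (\<lambda>n. sum f ({..<n} \<times> {..<n}))"
  shows "(\<lambda>n. sum f ({..<n} \<times> {..<n} - {(i,j). i + j < n})) \<longlonglongrightarrow> 0"
proof (rule LIMSEQ_I)
  let ?S = "\<lambda>n::nat. {..<n} \<times> {..<n}"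
  fix r :: real
  assume "0 < r"
  with convergent_Cauchy[OF assms(2)] obtain N
    where N: "\<And>m n. m \<ge> N \<Longrightarrow> n \<ge> N \<Longrightarrow> norm (sum f (?S m) - sum f (?S n)) < r"
    by (meson CauchyD)
  show "\<exists>N. \<forall>n\<ge>N. norm (sum f (?S n - {(i,j). i + j < n}) - 0) < r"
  proof (intro exI allI impI)
    fix n
    assume "2 * N \<le> n"
    have "?S (n div 2) \<subseteq> {(i,j). i + j < n}" "?S (n div 2) \<subseteq> ?S n"
      by auto
    then have "sum f (?S n - {(i,j). i + j < n}) \<le> sum f (?S n - ?S (n div 2))"
      by (intro sum_mono2 f_nonneg) auto
    also have "\<dots> = sum f (?S n) - sum f (?S (n div 2))"
      using \<open>?S (n div 2) \<subseteq> ?S n\<close> by (intro sum_diff) auto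
    also have "\<dots> \<le> norm (sum f (?S n) - sum f (?S (n div 2)))"
      by simp
    also have "\<dots> < r"
      using \<open>2 * N \<le> n\<close> by (intro N) auto
    finally show "norm (sum f (?S n - {(i,j). i + j < n}) - 0) < r"
      by (simp add: sum_nonneg f_nonneg)
  qed
qed

lemma (in bounded_bilinear) Cauchy_product_sums:
  assumes "summable a" "summable b"
    and norm_a: "summable (\<lambda>k. norm (a k))" and norm_b: "summable (\<lambda>k. norm (b k))"
  shows "(\<lambda>k. \<Sum>i\<le>k. prod (a i) (b (k - i))) sums (prod (\<Sum>k. a k) (\<Sum>k. b k))"
proof -
  obtain K where "K > 0" and K: "\<And>x y. norm (prod x y) \<le> norm x * norm y * K"
    using pos_bounded by blast
  let ?S1 = "\<lambda>n::nat. {..<n} \<times> {..<n}"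
  let ?S2 = "\<lambda>n::nat. {(i,j). i + j < n}"
  let ?g = "\<lambda>(i,j). prod (a i) (b j)"
  let ?f = "\<lambda>(i,j). norm (a i) * norm (b j) * K"
  have "(\<lambda>n. prod (\<Sum>k<n. a k) (\<Sum>k<n. b k)) \<longlonglongrightarrow> prod (\<Sum>k. a k) (\<Sum>k. b k)"
    using assms(1,2) by (intro tendsto summable_LIMSEQ)
  moreover have "prod (\<Sum>k<n. a k) (\<Sum>k<n. b k) = sum ?g (?S1 n)" for n
    unfolding sum_left by (simp only: sum_right sum.cartesian_product)
  ultimately have lim_S1: "(\<lambda>n. sum ?g (?S1 n)) \<longlonglongrightarrow> prod (\<Sum>k. a k) (\<Sum>k. b k)"
    by simp
  have "(\<lambda>n. (\<Sum>k<n. norm (a k)) * (\<Sum>k<n. norm (b k)) * K) \<longlonglongrightarrow> (\<Sum>k. norm (a k)) * (\<Sum>k. norm (b k)) * K"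
    using norm_a norm_b by (intro tendsto_mult tendsto_const summable_LIMSEQ)
  moreover have "(\<Sum>k<n. norm (a k)) * (\<Sum>k<n. norm (b k)) * K = sum ?f (?S1 n)" for n
  proof -
    have "sum ?f (?S1 n) = (\<Sum>(i,j)\<in>?S1 n. norm (a i) * norm (b j)) * K"
      by (simp add: sum_distrib_right case_prod_unfold)
    also have "\<dots> = (\<Sum>k<n. norm (a k)) * (\<Sum>k<n. norm (b k)) * K"
      by (simp add: sum_product sum.cartesian_product)
    finally show ?thesis ..
  qed
  ultimately have "convergent (\<lambda>n. sum ?f (?S1 n))"
    by (auto intro: convergentI)
  then have lim_f: "(\<lambda>n. sum ?f (?S1 n - ?S2 n)) \<longlonglongrightarrow> 0"
    using \<open>K > 0\<close> by (intro sum_square_minus_triangle_tendsto_0) auto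
  have "\<forall>n. norm (sum ?g (?S1 n - ?S2 n)) \<le> sum ?f (?S1 n - ?S2 n)"
    by (auto intro!: order_trans[OF norm_sum sum_mono] simp: K)
  from Lim_null_comparison[OF always_eventually[OF this] lim_f]
  have "(\<lambda>n. sum ?g (?S1 n - ?S2 n)) \<longlonglongrightarrow> 0" .
  moreover have "(\<lambda>n. sum ?g (?S1 n - ?S2 n)) = (\<lambda>n. sum ?g (?S1 n) - sum ?g (?S2 n))"
    by (intro ext sum_diff) auto
  ultimately have "(\<lambda>n. sum ?g (?S1 n) - sum ?g (?S2 n)) \<longlonglongrightarrow> 0"
    by (simp only:)
  with lim_S1 have "(\<lambda>n. sum ?g (?S2 n)) \<longlonglongrightarrow> prod (\<Sum>k. a k) (\<Sum>k. b k)"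
    by (rule Lim_transform2)
  then show ?thesis
    by (simp only: sums_def sum.triangle_reindex)
qed

lemma sum_mult_pow_div_fact: "(\<Sum>i\<le>k. s ^ i / fact i * (t ^ (k - i) / fact (k - i))) = (s + t) ^ k / (fact k :: real)"
proof -
  have "(s + t) ^ k / fact k = (\<Sum>i\<le>k. of_nat (k choose i) * s ^ i * t ^ (k - i) / fact k)"
    by (simp add: binomial_ring sum_divide_distrib)
  also have "\<dots> = (\<Sum>i\<le>k. s ^ i / fact i * (t ^ (k - i) / fact (k - i)))"
    by (intro sum.cong refl) (simp add: binomial_fact)
  finally show ?thesis ..
qed

lemma op_exp_add:
  fixes A :: "'a::banach \<Rightarrow>\<^sub>L 'a"
  shows "op_exp (s + t) A = op_exp s A o\<^sub>L op_exp t A"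
proof -
  let ?a = "\<lambda>t n. (t ^ n / fact n) *\<^sub>R blpow A n"
  have "(\<lambda>k. \<Sum>i\<le>k. ?a s i o\<^sub>L ?a t (k - i)) sums (op_exp s A o\<^sub>L op_exp t A)"
    unfolding op_exp_def
    by (intro bounded_bilinear.Cauchy_product_sums[OF bounded_bilinear_blinfun_compose]
        summable_op_exp_series summable_norm_op_exp_series)
  moreover have "(\<Sum>i\<le>k. ?a s i o\<^sub>L ?a t (k - i)) = ?a (s + t) k" for k
  proof -
    have "(\<Sum>i\<le>k. ?a s i o\<^sub>L ?a t (k - i)) = (\<Sum>i\<le>k. (s ^ i / fact i * (t ^ (k - i) / fact (k - i))) *\<^sub>R blpow A k)"
      by (intro sum.cong refl) (simp add: bounded_bilinear.scaleR_left[OF bounded_bilinear_blinfun_compose]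
          bounded_bilinear.scaleR_right[OF bounded_bilinear_blinfun_compose] blpow_add mult.commute)
    then show ?thesis
      by (simp only: sum_mult_pow_div_fact flip: scaleR_sum_left)
  qed
  ultimately show ?thesis
    unfolding op_exp_def[of "s + t"] by (simp add: sums_iff)
qed

lemma op_exp_measurable:
  fixes A :: "'a::banach \<Rightarrow>\<^sub>L 'a"
  shows "(\<lambda>t. op_exp t A) \<in> borel_measurable borel"
proof (rule borel_measurable_LIMSEQ_metric[where f = "\<lambda>i t. \<Sum>n<i. (t ^ n / fact n) *\<^sub>R blpow A n"])
  show "(\<lambda>t. \<Sum>n<i. (t ^ n / fact n) *\<^sub>R blpow A n) \<in> borel_measurable borel" for i
    by (intro borel_measurable_continuous_onI continuous_intros) auto
  show "(\<lambda>i. \<Sum>n<i. (t ^ n / fact n) *\<^sub>R blpow A n) \<longlonglongrightarrow> op_exp t A" for t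
    unfolding op_exp_def by (rule summable_LIMSEQ[OF summable_op_exp_series])
qed

section \<open>Truncating a semi-continuous frame\<close>

lemma continuous_on_cinner_right [continuous_intros]:
  "continuous_on S h \<Longrightarrow> continuous_on S (\<lambda>x. cinner (f :: 'a::complex_inner) (h x))"
  using bounded_linear.continuous_on[OF bounded_linear_cinner_right] by blast

lemma frame_integrand_measurable:
  fixes A :: "'a::complex_hilbert \<Rightarrow>\<^sub>L 'a"
  shows "(\<lambda>t. ennreal ((cmod (cinner f (blinfun_apply (op_exp t A) g)))\<^sup>2)) \<in> borel_measurable borel"
proof -
  have "(\<lambda>T. (cmod (cinner f (blinfun_apply T g)))\<^sup>2) \<in> borel_measurable borel"
    by (intro borel_measurable_continuous_onI continuous_intros)
  from measurable_compose[OF op_exp_measurable this] show ?thesis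
    by simp
qed

lemma frame_sum_mono: "S \<subseteq> T \<Longrightarrow> frame_sum A G S f \<le> frame_sum A G T f"
  unfolding frame_sum_def
  by (intro nn_integral_mono mult_right_mono) (auto simp: indicator_def)

lemma frame_sum_le_truncation_plus_shift:
  fixes A :: "'a::complex_hilbert \<Rightarrow>\<^sub>L 'a"
  assumes "L \<ge> 0" and adjoint: "\<And>x. cinner f (blinfun_apply (op_exp L A) x) = cinner u x"
  shows "frame_sum A G {0..} f \<le> frame_sum A G {0..L} f + frame_sum A G {0..} u"
proof -
  define F where "F f g t = ennreal ((cmod (cinner f (blinfun_apply (op_exp t A) g)))\<^sup>2)" for f g t
  have [measurable]: "F f g \<in> borel_measurable borel" for f g
    unfolding F_def by (rule frame_integrand_measurable)
  have shift: "F f g (L + s) = F u g s" for g s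
    by (simp add: F_def op_exp_add adjoint)
  have split: "(\<integral>\<^sup>+ t. indicator {0..} t * F f g t \<partial>lborel)
      \<le> (\<integral>\<^sup>+ t. indicator {0..L} t * F f g t \<partial>lborel) + (\<integral>\<^sup>+ t. indicator {0..} t * F u g t \<partial>lborel)"
    for g
  proof -
    have "(\<integral>\<^sup>+ t. indicator {0..} t * F f g t \<partial>lborel)
        = (\<integral>\<^sup>+ t. indicator {0..L} t * F f g t \<partial>lborel) + (\<integral>\<^sup>+ t. indicator {L<..} t * F f g t \<partial>lborel)"
      using \<open>L \<ge> 0\<close>
      by (subst nn_integral_add[symmetric]) (auto intro!: nn_integral_cong simp: indicator_def)
    also have "(\<integral>\<^sup>+ t. indicator {L<..} t * F f g t \<partial>lborel)
        = (\<integral>\<^sup>+ s. indicator {L<..} (L + s) * F u g s \<partial>lborel)"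
      using nn_integral_real_affine[of "\<lambda>t. indicator {L<..} t * F f g t" 1 L] by (simp add: shift)
    also have "\<dots> \<le> (\<integral>\<^sup>+ t. indicator {0..} t * F u g t \<partial>lborel)"
      by (intro nn_integral_mono mult_right_mono) (auto simp: indicator_def)
    finally show ?thesis
      by (simp add: add_left_mono)
  qed
  have "frame_sum A G {0..} f
      \<le> (\<integral>\<^sup>+ g. (\<integral>\<^sup>+ t. indicator {0..L} t * F f g t \<partial>lborel) + (\<integral>\<^sup>+ t. indicator {0..} t * F u g t \<partial>lborel)
          \<partial>count_space G)"
    unfolding frame_sum_def F_def[symmetric] by (intro nn_integral_mono split)
  also have "\<dots> = frame_sum A G {0..L} f + frame_sum A G {0..} u"
    unfolding frame_sum_def F_def[symmetric] by (rule nn_integral_add) simp_all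
  finally show ?thesis .
qed

lemma frame_lower_bound_on_interval:
  fixes A :: "'a::complex_hilbert \<Rightarrow>\<^sub>L 'a"
  assumes A: "complex_linear_op A" and "L \<ge> 0" and "C \<ge> 0"
    and lower: "\<And>f. ennreal (c * (norm f)\<^sup>2) \<le> frame_sum A G {0..} f"
    and upper: "\<And>f. frame_sum A G {0..} f \<le> ennreal (C * (norm f)\<^sup>2)"
    and small: "C * (norm (op_exp L A))\<^sup>2 \<le> c / 2"
  shows "ennreal (c / 2 * (norm f)\<^sup>2) \<le> frame_sum A G {0..L} f"
proof -
  obtain u where u: "norm u \<le> norm (op_exp L A) * norm f"
    and adjoint: "\<And>x. cinner f (blinfun_apply (op_exp L A) x) = cinner u x"
    using exists_adjoint_vector[OF op_exp_cscale[OF A]] by blast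
  have "0 \<le> C * (norm (op_exp L A))\<^sup>2"
    using \<open>C \<ge> 0\<close> by simp
  with small have "c \<ge> 0"
    by linarith
  have "(norm u)\<^sup>2 \<le> (norm (op_exp L A))\<^sup>2 * (norm f)\<^sup>2"
    using power_mono[OF u norm_ge_zero, of 2] by (simp add: power_mult_distrib)
  then have "C * (norm u)\<^sup>2 \<le> C * (norm (op_exp L A))\<^sup>2 * (norm f)\<^sup>2"
    using \<open>C \<ge> 0\<close> by (simp add: mult.assoc mult_left_mono)
  also have "\<dots> \<le> c / 2 * (norm f)\<^sup>2"
    using small by (intro mult_right_mono) auto
  finally have tail: "frame_sum A G {0..} u \<le> ennreal (c / 2 * (norm f)\<^sup>2)"
    using upper[of u] by (meson ennreal_leI order_trans)
  have "ennreal (c / 2 * (norm f)\<^sup>2) + ennreal (c / 2 * (norm f)\<^sup>2) = ennreal (c * (norm f)\<^sup>2)"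
    using \<open>c \<ge> 0\<close> by (simp flip: ennreal_plus)
  also have "\<dots> \<le> frame_sum A G {0..L} f + frame_sum A G {0..} u"
    using lower[of f] frame_sum_le_truncation_plus_shift[OF \<open>L \<ge> 0\<close> adjoint] by (rule order_trans)
  also have "\<dots> \<le> frame_sum A G {0..L} f + ennreal (c / 2 * (norm f)\<^sup>2)"
    using tail by (rule add_left_mono)
  finally show ?thesis
    by (simp add: ennreal_add_left_cancel_le add.commute)
qed

lemma exists_exp_decay_le:
  fixes \<omega> K \<epsilon> :: real
  assumes "\<omega> < 0" "K \<ge> 0" "\<epsilon> > 0"
  shows "\<exists>L>0. K * exp (\<omega> * L) \<le> \<epsilon>"
proof (cases "K = 0")
  case False
  define L where "L = max 1 (ln (\<epsilon> / K) / \<omega>)"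
  have "\<omega> * L \<le> \<omega> * (ln (\<epsilon> / K) / \<omega>)"
    using \<open>\<omega> < 0\<close> by (intro mult_left_mono_neg) (auto simp: L_def)
  then have "exp (\<omega> * L) \<le> exp (ln (\<epsilon> / K))"
    using \<open>\<omega> < 0\<close> by simp
  also have "\<dots> = \<epsilon> / K"
    using assms(2,3) False by simp
  finally have "exp (\<omega> * L) \<le> \<epsilon> / K" .
  then have "K * exp (\<omega> * L) \<le> \<epsilon>"
    using assms(2) False by (simp add: field_simps)
  then show ?thesis
    by (intro exI[of _ L]) (simp add: L_def)
qed (use assms in \<open>auto intro: exI[of _ 1]\<close>)

lemma exp_stable_norm_op_exp_small:
  assumes "exp_stable A" and "K \<ge> 0" and "\<epsilon> > 0"
  shows "\<exists>L>0. K * (norm (op_exp L A))\<^sup>2 \<le> \<epsilon>"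
proof -
  obtain M \<omega> where "\<omega> < 0" and stable: "\<And>t. t \<ge> 0 \<Longrightarrow> norm (op_exp t A) \<le> M * exp (\<omega> * t)"
    using assms(1) unfolding exp_stable_def by blast
  obtain L where "L > 0" and decay: "K * M\<^sup>2 * exp (2 * \<omega> * L) \<le> \<epsilon>"
    using exists_exp_decay_le[of "2 * \<omega>" "K * M\<^sup>2" \<epsilon>] \<open>\<omega> < 0\<close> assms(2,3) by auto
  have "K * (norm (op_exp L A))\<^sup>2 \<le> K * (M * exp (\<omega> * L))\<^sup>2"
    using stable[of L] \<open>L > 0\<close> \<open>K \<ge> 0\<close> by (intro mult_left_mono power_mono) auto
  also have "\<dots> = K * M\<^sup>2 * exp (2 * \<omega> * L)"
    by (simp add: power_mult_distrib mult.assoc flip: exp_double)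
  finally show ?thesis
    using decay \<open>L > 0\<close> by auto
qed

theorem mainTheorem3:
  fixes A :: "'a::complex_hilbert \<Rightarrow>\<^sub>L 'a" and G :: "'a set"
  assumes "separable_space (UNIV :: 'a set)"
    and "complex_linear_op A"
    and "countable G"
    and "semi_continuous_frame A G {0..}"
    and "exp_stable A"
  shows "\<exists>L::real. 0 < L \<and> semi_continuous_frame A G {0..L}"
proof -
  obtain c C where "c > 0" "C > 0"
    and lower: "\<And>f. ennreal (c * (norm f)\<^sup>2) \<le> frame_sum A G {0..} f"
    and upper: "\<And>f. frame_sum A G {0..} f \<le> ennreal (C * (norm f)\<^sup>2)"
    using assms(4) unfolding semi_continuous_frame_def by blast
  obtain L where "L > 0" and small: "C * (norm (op_exp L A))\<^sup>2 \<le> c / 2"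
    using exp_stable_norm_op_exp_small[OF assms(5), of C "c / 2"] \<open>c > 0\<close> \<open>C > 0\<close> by auto
  have "ennreal (c / 2 * (norm f)\<^sup>2) \<le> frame_sum A G {0..L} f" for f
    using frame_lower_bound_on_interval[OF assms(2) _ _ lower upper small] \<open>L > 0\<close> \<open>C > 0\<close> by simp
  moreover have "frame_sum A G {0..L} f \<le> ennreal (C * (norm f)\<^sup>2)" for f
    by (rule order_trans[OF frame_sum_mono upper]) auto
  ultimately show ?thesis
    unfolding semi_continuous_frame_def using \<open>L > 0\<close> \<open>c > 0\<close> \<open>C > 0\<close>
    by (intro exI[of _ L] conjI exI[of _ "c / 2"] exI[of _ C]) auto
qed

end
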